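(* Let $u_*$ be the unique solution in $(0,1)$ of the equation $\ln\frac{1-u}{-\ln u}-1-\frac12\frac{(1+u)\ln u}{1-u}=0$. Then $$F(\delta,u):=u^\delta-\Big(\frac12-\delta\Big)-\Big(\frac12+\delta\Big)u\ge0$$ for all $\delta\in(0,\frac12)$ and all $u\in[u_*,1]$.
   Context: Numerically $u_*=0.00505778\ldots$. *)

theory Defs
  imports Complex_Main
begin

definition ustar_eq :: "real \<Rightarrow> real" where
  "ustar_eq u = ln ((1 - u) / (- ln u)) - 1 - (1/2) * ((1 + u) * ln u / (1 - u))"

definition u_star :: real where
  "u_star = (THE u. 0 < u \<and> u < 1 \<and> ustar_eq u = 0)"

definition F :: "real \<Rightarrow> real \<Rightarrow> real" where
  "F \<delta> u = u powr \<delta> - (1/2 - \<delta>) - (1/2 + \<delta>) * u"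

end

theory Submission
  imports Defs
begin

(* For fixed u in (0,1) the map \<delta> \<mapsto> F \<delta> u is convex; its minimum is attained where
   u powr \<delta> = (1 - u) / - ln u and equals (1 - u) / ln u * ustar_eq u, so F \<delta> u \<ge> 0 for all \<delta>
   as soon as ustar_eq u \<le> 0.  For fixed \<delta> in (0,1) the map u \<mapsto> F \<delta> u is strictly concave
   and vanishes at u = 1, so F \<delta> a \<ge> 0 forces F \<delta> b > 0 for a < b < 1.  At a root a of
   ustar_eq this gives the inequality on [a,1]; for two roots a < b, taking \<delta> the minimiser
   at b gives F \<delta> b > 0 = min F (\<cdot>) b, so the root is unique.  It exists because ustar_eq changes
   sign between exp (-16) and exp (-1). *)

lemma ln_less_minus_one: "0 < x \<Longrightarrow> x \<noteq> 1 \<Longrightarrow> ln x < x - 1"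
  for x :: real
  using ln_le_minus_one[of x] ln_eq_minus_one[of x] by fastforce

lemma powr_chord_slope_strict_decreasing:
  fixes a b c d :: real
  assumes "0 < a" "a < b" "b < c" "0 < d" "d < 1"
  shows "(c powr d - b powr d) * (b - a) < (b powr d - a powr d) * (c - b)"
proof -
  have deriv: "((\<lambda>z. z powr d) has_real_derivative d * x powr (d - 1)) (at x)" if "0 < x" for x
    using that by (rule has_real_derivative_powr)
  obtain x where x: "a < x" "x < b" "b powr d - a powr d = (b - a) * (d * x powr (d - 1))"
    using MVT2[of a b "\<lambda>z. z powr d" "\<lambda>x. d * x powr (d - 1)"] deriv assms by force
  obtain y where y: "b < y" "y < c" "c powr d - b powr d = (c - b) * (d * y powr (d - 1))"
    using MVT2[of b c "\<lambda>z. z powr d" "\<lambda>x. d * x powr (d - 1)"] deriv assms by force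
  have "y powr (d - 1) < x powr (d - 1)"
    using powr_less_mono2_neg[of "d - 1" x y] assms x y by simp
  have "(c powr d - b powr d) * (b - a) = (c - b) * (b - a) * (d * y powr (d - 1))"
    using y by simp
  also have "\<dots> < (c - b) * (b - a) * (d * x powr (d - 1))"
    using \<open>y powr (d - 1) < x powr (d - 1)\<close> assms by (intro mult_strict_left_mono) auto
  also have "\<dots> = (b powr d - a powr d) * (c - b)"
    using x by simp
  finally show ?thesis .
qed

lemma F_pos_of_nonneg_below:
  fixes a b d :: real
  assumes "0 < a" "a < b" "b < 1" "0 < d" "d < 1" and "F d a \<ge> 0"
  shows "F d b > 0"
proof (rule ccontr)
  assume "\<not> F d b > 0"
  then have "(1/2 + d) * (1 - b) \<le> 1 - b powr d"
    and "b powr d - a powr d \<le> (1/2 + d) * (b - a)"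
    using \<open>F d a \<ge> 0\<close> by (simp_all add: F_def ring_distribs)
  then have "(b powr d - a powr d) * (1 - b) \<le> (1/2 + d) * (1 - b) * (b - a)"
    and "(1/2 + d) * (1 - b) * (b - a) \<le> (1 - b powr d) * (b - a)"
    using assms by (simp_all add: mult_right_mono mult.commute mult.left_commute)
  moreover have "(1 - b powr d) * (b - a) < (b powr d - a powr d) * (1 - b)"
    using powr_chord_slope_strict_decreasing[of a b 1 d] assms by simp
  ultimately show False
    by linarith
qed

definition minimising_exponent :: "real \<Rightarrow> real" where
  "minimising_exponent u = ln ((1 - u) / - ln u) / ln u"

lemma ln_quotient_bounds:
  fixes u :: real
  assumes "0 < u" "u < 1"
  shows "u < (1 - u) / - ln u" "(1 - u) / - ln u < 1"
proof -
  have "ln u < 0" using assms by simp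
  have "ln (1/u) < 1/u - 1"
    using ln_less_minus_one[of "1/u"] assms by simp
  then have "- ln u * u < 1 - u"
    using assms by (simp add: ln_div field_simps)
  then show "u < (1 - u) / - ln u"
    using \<open>ln u < 0\<close> by (subst pos_less_divide_eq) (auto simp: mult.commute)
  show "(1 - u) / - ln u < 1"
    using ln_less_minus_one[of u] assms \<open>ln u < 0\<close> by (subst pos_divide_less_eq) auto
qed

lemma powr_minimising_exponent:
  fixes u :: real
  assumes "0 < u" "u < 1"
  shows "u powr minimising_exponent u = (1 - u) / - ln u"
  using ln_quotient_bounds[OF assms] assms by (simp add: minimising_exponent_def powr_def)

lemma minimising_exponent_bounds:
  fixes u :: real
  assumes "0 < u" "u < 1"
  shows "0 < minimising_exponent u" "minimising_exponent u < 1"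
proof -
  have "ln u < ln ((1 - u) / - ln u)" "ln ((1 - u) / - ln u) < 0"
    using ln_quotient_bounds[OF assms] assms by auto
  moreover have "ln u < 0" using assms by simp
  ultimately show "0 < minimising_exponent u" "minimising_exponent u < 1"
    by (simp_all add: minimising_exponent_def divide_neg_neg neg_divide_less_eq)
qed

lemma F_minimising_exponent:
  fixes u :: real
  assumes "0 < u" "u < 1"
  shows "F (minimising_exponent u) u = (1 - u) / ln u * ustar_eq u"
proof -
  define c where "c = (1 - u) / - ln u"
  have "ln u < 0" using assms by simp
  have "F (minimising_exponent u) u = c - (1/2 - ln c / ln u) - (1/2 + ln c / ln u) * u"
    unfolding F_def powr_minimising_exponent[OF assms] by (simp add: c_def minimising_exponent_def)
  also have "\<dots> = (1 - u) / ln u * (ln c - 1 - 1/2 * ((1 + u) * ln u / (1 - u)))"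
    using \<open>ln u < 0\<close> assms by (simp add: c_def field_simps)
  finally show ?thesis
    by (simp add: ustar_eq_def c_def)
qed

lemma F_ge_F_minimising_exponent:
  fixes d u :: real
  assumes "0 < u" "u < 1"
  shows "F d u \<ge> F (minimising_exponent u) u"
proof -
  define t where "t = minimising_exponent u"
  have "ln u < 0" using assms by simp
  have "u powr t * (1 + (d - t) * ln u) \<le> u powr t * exp ((d - t) * ln u)"
    by (intro mult_left_mono) auto
  also have "\<dots> = u powr d"
    using assms by (simp add: powr_def algebra_simps flip: exp_add)
  finally have "u powr t * (1 + (d - t) * ln u) \<le> u powr d" .
  moreover have "u powr t * (1 + (d - t) * ln u) = u powr t - (1 - u) * (d - t)"
    using \<open>ln u < 0\<close> assms by (simp add: t_def powr_minimising_exponent field_simps)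
  ultimately show ?thesis
    by (simp add: F_def t_def algebra_simps)
qed

lemma F_nonneg_of_ustar_eq_nonpos:
  fixes d u :: real
  assumes "0 < u" "u < 1" "ustar_eq u \<le> 0"
  shows "F d u \<ge> 0"
proof -
  have "(1 - u) / ln u < 0" using assms by (simp add: divide_pos_neg)
  then have "0 \<le> (1 - u) / ln u * ustar_eq u"
    using assms by (intro mult_nonpos_nonpos) auto
  also have "\<dots> = F (minimising_exponent u) u"
    using F_minimising_exponent[OF assms(1,2)] by simp
  also have "\<dots> \<le> F d u"
    using F_ge_F_minimising_exponent[OF assms(1,2)] .
  finally show ?thesis .
qed

lemma ustar_eq_no_two_roots:
  fixes a b :: real
  assumes "0 < a" "a < b" "b < 1" "ustar_eq a = 0" "ustar_eq b = 0"
  shows False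
proof -
  define t where "t = minimising_exponent b"
  have "F t b = 0"
    using F_minimising_exponent[of b] assms by (simp add: t_def)
  moreover have "F t a \<ge> 0"
    using F_nonneg_of_ustar_eq_nonpos[of a] assms by simp
  then have "F t b > 0"
    using F_pos_of_nonneg_below[of a b t] minimising_exponent_bounds[of b] assms by (simp add: t_def)
  ultimately show False by simp
qed

lemma continuous_on_ustar_eq: "continuous_on {0<..<1} ustar_eq"
proof (intro continuous_at_imp_continuous_on ballI)
  fix x :: real
  assume "x \<in> {0<..<1}"
  then have "0 < x" "x < 1" "(1 - x) / - ln x > 0"
    by (simp_all add: divide_pos_neg)
  then show "isCont ustar_eq x"
    unfolding ustar_eq_def[abs_def] by (auto intro!: continuous_intros)
qed

lemma ustar_eq_exp_neg:
  fixes x :: real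
  assumes "0 < x"
  shows "ustar_eq (exp (- x)) = ln (1 - exp (- x)) - ln x - 1
    + x / 2 * ((1 + exp (- x)) / (1 - exp (- x)))"
  using assms by (simp add: ustar_eq_def ln_div)

lemma ustar_eq_exp_neg_one: "ustar_eq (exp (- 1)) < 0"
proof -
  define e :: real where "e = exp (- 1)"
  have "0 < e" "e * exp 1 = 1"
    by (simp_all add: e_def flip: exp_add)
  moreover have "2 < exp (1::real)"
    using exp_lower_Taylor_quadratic[of 1] by simp
  ultimately have "e < 1/2"
    using mult_strict_left_mono[of 2 "exp 1" e] by linarith
  then have "(1 + e) / (2 * (1 - e)) < 1 + e"
    using \<open>0 < e\<close> by (simp add: divide_less_eq)
  moreover have "ln (1 - e) \<le> - e"
    using ln_le_minus_one[of "1 - e"] \<open>e < 1/2\<close> by simp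
  ultimately show ?thesis
    using ustar_eq_exp_neg[of 1] by (simp add: e_def)
qed

lemma ustar_eq_exp_neg_sixteen: "ustar_eq (exp (- 16)) > 0"
proof -
  define e :: real where "e = exp (- 16)"
  have "0 < e" "e \<le> 1/2"
    using exp_ge_add_one_self[of 16] by (simp_all add: e_def exp_minus field_simps)
  have "- e - 2 * e\<^sup>2 \<le> ln (1 - e)"
    using \<open>0 < e\<close> \<open>e \<le> 1/2\<close> by (intro ln_one_minus_pos_lower_bound) auto
  moreover have "e\<^sup>2 \<le> 1/4"
    using power_mono[of e "1/2" 2] \<open>0 < e\<close> \<open>e \<le> 1/2\<close> by (simp add: power_divide)
  moreover have "ln (16::real) \<le> 4"
  proof -
    have "ln (16::real) = 4 * ln 2"
      using ln_realpow[of 2 4] by simp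
    then show ?thesis
      using ln_le_minus_one[of 2] by simp
  qed
  moreover have "(1 + e) / (1 - e) \<ge> 1"
    using \<open>0 < e\<close> \<open>e \<le> 1/2\<close> by simp
  moreover have "ustar_eq e = ln (1 - e) - ln 16 - 1 + 8 * ((1 + e) / (1 - e))"
    using ustar_eq_exp_neg[of 16] by (simp add: e_def)
  ultimately show ?thesis
    unfolding e_def[symmetric] using \<open>e \<le> 1/2\<close> by linarith
qed

lemma ustar_eq_root_exists: "\<exists>u. 0 < u \<and> u < 1 \<and> ustar_eq u = 0"
proof -
  have "0 < exp (- 16 :: real)" "exp (- 1 :: real) < 1"
    by simp_all
  then have interval: "{exp (- 16) .. exp (- 1)} \<subseteq> {0<..<1::real}"
    by (auto simp del: exp_gt_zero exp_less_one_iff)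
  have "\<exists>u. exp (- 16) \<le> u \<and> u \<le> exp (- 1) \<and> ustar_eq u = 0"
  proof (rule IVT2')
    show "continuous_on {exp (- 16) .. exp (- 1)} ustar_eq"
      using interval by (rule continuous_on_subset[OF continuous_on_ustar_eq])
  qed (use ustar_eq_exp_neg_one ustar_eq_exp_neg_sixteen in auto)
  then show ?thesis
    using interval by (meson atLeastAtMost_iff greaterThanLessThan_iff subsetD)
qed

theorem lemma3p5:
  shows "(\<exists>!u. 0 < u \<and> u < 1 \<and> ustar_eq u = 0) \<and>
         (\<forall>\<delta> u. 0 < \<delta> \<and> \<delta> < 1/2 \<and> u_star \<le> u \<and> u \<le> 1 \<longrightarrow> F \<delta> u \<ge> 0)"
proof -
  have ex1: "\<exists>!u. 0 < u \<and> u < 1 \<and> ustar_eq u = 0"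
    using ustar_eq_root_exists ustar_eq_no_two_roots by (metis linorder_neqE_linordered_idom)
  then have root: "0 < u_star \<and> u_star < 1 \<and> ustar_eq u_star = 0"
    unfolding u_star_def by (rule theI')
  have "F \<delta> u \<ge> 0" if "0 < \<delta>" "\<delta> < 1/2" "u_star \<le> u" "u \<le> 1" for \<delta> u
  proof -
    have at_root: "F \<delta> u_star \<ge> 0"
      using F_nonneg_of_ustar_eq_nonpos root by simp
    show ?thesis
      using at_root F_pos_of_nonneg_below[of u_star u \<delta>] root that
      by (cases "u = u_star \<or> u = 1") (auto simp: F_def)
  qed
  with ex1 show ?thesis by blast
qed

end
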